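(* Let $(X,\mu)$ be a measure space, $\mathcal H=L^2(X,\mu)$ the real Hilbert space with inner product $\langle\cdot,\cdot\rangle$, and $\hat H\colon \operatorname{dom}(\hat H)\subset\mathcal H\to\mathcal H$ a densely defined self-adjoint linear operator. Let $\theta\mapsto\psi_\theta\in\operatorname{dom}(\hat H)\setminus\{0\}$, $\theta\in\mathbb R^P$, be a sufficiently regular family of real-valued wavefunctions with $\psi_\theta(x)\neq 0$ for $\mu$-a.e. $x$ (regular enough that all expressions below are well defined, $\partial_{\theta_j}\psi_\theta\in\operatorname{dom}(\hat H)$ with $\hat H\partial_{\theta_j}\psi_\theta=\partial_{\theta_j}(\hat H\psi_\theta)$, and differentiation under the integral sign is permitted). Set $\hat\psi_\theta=\psi_\theta/\|\psi_\theta\|$ and define \[ H(\theta)_{ij}=\langle \partial_{\theta_i}\hat\psi_\theta,\hat H\,\partial_{\theta_j}\hat\psi_\theta\rangle,\qquad i,j=1,\dots,P. \] Let $p_\theta=\psi_\theta^2/\|\psi_\theta\|^2$ be the Born density and write $\langle f\rangle=\int_X f\,p_\theta\,d\mu$. Let $E_L=\hat H\psi_\theta/\psi_\theta$ be the local energy and $E_{L,j}=\partial_{\theta_j}E_L$. Then for all $i,j$, \[ H(\theta)_{ij}=\Big\langle \Big[E_{L,j}+E_L\big(\partial_{\theta_j}\log|\psi_\theta|-\langle\partial_{\theta_j}\log|\psi_\theta|\rangle\big)\Big]\cdot\Big[\partial_{\theta_i}\log|\psi_\theta|-\langle\partial_{\theta_i}\log|\psi_\theta|\rangle\Big]\Big\rangle.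 \]
   Context: All wavefunctions are real. $\|\cdot\|$ is the norm induced by $\langle\cdot,\cdot\rangle$. *)

theory Defs
  imports "HOL-Analysis.Analysis"
begin

definition L2 :: "'a measure \<Rightarrow> ('a \<Rightarrow> real) set" where
  "L2 M = {f. f \<in> borel_measurable M \<and> integrable M (\<lambda>x. (f x)\<^sup>2)}"

definition l2_inner :: "'a measure \<Rightarrow> ('a \<Rightarrow> real) \<Rightarrow> ('a \<Rightarrow> real) \<Rightarrow> real" where
  "l2_inner M f g = (\<integral>x. f x * g x \<partial>M)"

definition l2_norm :: "'a measure \<Rightarrow> ('a \<Rightarrow> real) \<Rightarrow> real" where
  "l2_norm M f = sqrt (\<integral>x. (f x)\<^sup>2 \<partial>M)"

text \<open>A linear operator on L^2 given on representatives: domain D is a linear subspace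
  of L^2 closed under a.e. equality, the operator maps into L^2, is well defined
  modulo a.e. equality, and is linear (modulo a.e. equality).\<close>
definition L2_linear_operator ::
  "'a measure \<Rightarrow> ('a \<Rightarrow> real) set \<Rightarrow> (('a \<Rightarrow> real) \<Rightarrow> ('a \<Rightarrow> real)) \<Rightarrow> bool" where
  "L2_linear_operator M D Hop \<longleftrightarrow>
     D \<subseteq> L2 M \<and> (\<forall>f\<in>D. Hop f \<in> L2 M) \<and>
     (\<forall>f\<in>D. \<forall>g\<in>L2 M. (AE x in M. f x = g x) \<longrightarrow> g \<in> D \<and> (AE x in M. Hop f x = Hop g x)) \<and>
     (\<forall>f\<in>D. \<forall>g\<in>D. \<forall>a b::real. (\<lambda>x. a * f x + b * g x) \<in> D \<and>
        (AE x in M. Hop (\<lambda>y. a * f y + b * g y) x = a * Hop f x + b * Hop g x))"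

definition densely_defined :: "'a measure \<Rightarrow> ('a \<Rightarrow> real) set \<Rightarrow> bool" where
  "densely_defined M D \<longleftrightarrow>
     (\<forall>f\<in>L2 M. \<forall>e>0. \<exists>g\<in>D. l2_norm M (\<lambda>x. f x - g x) < e)"

text \<open>Self-adjoint: symmetric (D \<subseteq> dom H*, H* = H on D) and dom H* \<subseteq> D.\<close>
definition self_adjoint ::
  "'a measure \<Rightarrow> ('a \<Rightarrow> real) set \<Rightarrow> (('a \<Rightarrow> real) \<Rightarrow> ('a \<Rightarrow> real)) \<Rightarrow> bool" where
  "self_adjoint M D Hop \<longleftrightarrow>
     (\<forall>f\<in>D. \<forall>g\<in>D. l2_inner M (Hop f) g = l2_inner M f (Hop g)) \<and>
     (\<forall>g\<in>L2 M. \<forall>h\<in>L2 M. (\<forall>f\<in>D. l2_inner M (Hop f) g = l2_inner M f h)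
        \<longrightarrow> g \<in> D \<and> (AE x in M. Hop g x = h x))"

definition pd :: "(real^'p \<Rightarrow> real) \<Rightarrow> real^'p \<Rightarrow> 'p \<Rightarrow> real" where
  "pd f \<theta> j = deriv (\<lambda>t. f (\<theta> + t *\<^sub>R axis j 1)) 0"

definition has_pd :: "(real^'p \<Rightarrow> real) \<Rightarrow> real^'p \<Rightarrow> 'p \<Rightarrow> real \<Rightarrow> bool" where
  "has_pd f \<theta> j D \<longleftrightarrow> ((\<lambda>t. f (\<theta> + t *\<^sub>R axis j 1)) has_real_derivative D) (at 0)"

definition psi_hat :: "'a measure \<Rightarrow> (real^'p \<Rightarrow> 'a \<Rightarrow> real) \<Rightarrow> real^'p \<Rightarrow> 'a \<Rightarrow> real" where
  "psi_hat M \<psi> \<theta> x = \<psi> \<theta> x / l2_norm M (\<psi> \<theta>)"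

definition Hmat ::
  "'a measure \<Rightarrow> (('a \<Rightarrow> real) \<Rightarrow> ('a \<Rightarrow> real)) \<Rightarrow> (real^'p \<Rightarrow> 'a \<Rightarrow> real) \<Rightarrow> real^'p \<Rightarrow> 'p \<Rightarrow> 'p \<Rightarrow> real" where
  "Hmat M Hop \<psi> \<theta> i j =
     l2_inner M (\<lambda>x. pd (\<lambda>\<theta>'. psi_hat M \<psi> \<theta>' x) \<theta> i)
                (Hop (\<lambda>x. pd (\<lambda>\<theta>'. psi_hat M \<psi> \<theta>' x) \<theta> j))"

definition born :: "'a measure \<Rightarrow> (real^'p \<Rightarrow> 'a \<Rightarrow> real) \<Rightarrow> real^'p \<Rightarrow> 'a \<Rightarrow> real" where
  "born M \<psi> \<theta> x = (\<psi> \<theta> x)\<^sup>2 / (l2_norm M (\<psi> \<theta>))\<^sup>2"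

definition born_exp :: "'a measure \<Rightarrow> (real^'p \<Rightarrow> 'a \<Rightarrow> real) \<Rightarrow> real^'p \<Rightarrow> ('a \<Rightarrow> real) \<Rightarrow> real" where
  "born_exp M \<psi> \<theta> f = (\<integral>x. f x * born M \<psi> \<theta> x \<partial>M)"

definition local_energy ::
  "(('a \<Rightarrow> real) \<Rightarrow> ('a \<Rightarrow> real)) \<Rightarrow> (real^'p \<Rightarrow> 'a \<Rightarrow> real) \<Rightarrow> real^'p \<Rightarrow> 'a \<Rightarrow> real" where
  "local_energy Hop \<psi> \<theta> x = Hop (\<psi> \<theta>) x / \<psi> \<theta> x"

definition local_energy_d ::
  "(('a \<Rightarrow> real) \<Rightarrow> ('a \<Rightarrow> real)) \<Rightarrow> (real^'p \<Rightarrow> 'a \<Rightarrow> real) \<Rightarrow> real^'p \<Rightarrow> 'p \<Rightarrow> 'a \<Rightarrow> real" where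
  "local_energy_d Hop \<psi> \<theta> j x = pd (\<lambda>\<theta>'. local_energy Hop \<psi> \<theta>' x) \<theta> j"

definition dlog :: "(real^'p \<Rightarrow> 'a \<Rightarrow> real) \<Rightarrow> real^'p \<Rightarrow> 'p \<Rightarrow> 'a \<Rightarrow> real" where
  "dlog \<psi> \<theta> j x = pd (\<lambda>\<theta>'. ln \<bar>\<psi> \<theta>' x\<bar>) \<theta> j"

end

theory Submission imports Defs begin

text \<open>Differentiating \<open>\<psi>\<^sub>\<theta>/\<parallel>\<psi>\<^sub>\<theta>\<parallel>\<close> gives
  \<open>\<partial>\<^sub>k \<psi>_hat = (\<partial>\<^sub>k \<psi> - c\<^sub>k \<psi>) / \<parallel>\<psi>\<parallel>\<close> with \<open>c\<^sub>k = \<langle>\<psi>, \<partial>\<^sub>k \<psi>\<rangle> / \<parallel>\<psi>\<parallel>\<^sup>2\<close>, and \<open>c\<^sub>k\<close> is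
  precisely the Born average of \<open>\<partial>\<^sub>k log \<bar>\<psi>\<bar> = \<partial>\<^sub>k \<psi> / \<psi>\<close>. Linearity of \<open>H\<close> and its
  commutation with \<open>\<partial>\<^sub>j\<close> give \<open>H \<partial>\<^sub>j \<psi>_hat = (\<partial>\<^sub>j (H\<psi>) - c\<^sub>j H\<psi>) / \<parallel>\<psi>\<parallel>\<close> almost
  everywhere. Wherever \<open>\<psi> \<noteq> 0\<close>, i.e. almost everywhere, the quotient rule for
  \<open>E\<^sub>L = H\<psi> / \<psi>\<close> then makes the integrand on the right-hand side equal to
  \<open>\<partial>\<^sub>i \<psi>_hat \<cdot> H \<partial>\<^sub>j \<psi>_hat\<close> pointwise.\<close>

lemma pd_eqI: "has_pd f \<theta> k d \<Longrightarrow> pd f \<theta> k = d"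
  unfolding has_pd_def pd_def by (rule DERIV_imp_deriv)

lemma has_pd_pd: "\<exists>d. has_pd f \<theta> k d \<Longrightarrow> has_pd f \<theta> k (pd f \<theta> k)"
  using pd_eqI by metis

lemma has_pd_compose:
  "has_pd f \<theta> k a \<Longrightarrow> (g has_real_derivative b) (at (f \<theta>)) \<Longrightarrow>
   has_pd (\<lambda>t. g (f t)) \<theta> k (b * a)"
  unfolding has_pd_def by (rule DERIV_chain2[where f=g]) auto

lemma has_pd_divide:
  "has_pd f \<theta> k a \<Longrightarrow> has_pd g \<theta> k b \<Longrightarrow> g \<theta> \<noteq> 0 \<Longrightarrow>
   has_pd (\<lambda>t. f t / g t) \<theta> k ((a * g \<theta> - f \<theta> * b) / (g \<theta>)\<^sup>2)"
  unfolding has_pd_def power2_eq_square by (drule (1) DERIV_divide) auto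

lemma DERIV_ln_abs:
  fixes y :: real
  assumes "y \<noteq> 0"
  shows "((\<lambda>y. ln \<bar>y\<bar>) has_real_derivative 1 / y) (at y)"
proof -
  have ln_abs: "ln \<bar>z\<bar> = ln (z\<^sup>2) / 2" for z :: real
  proof (cases "z = 0")
    case False
    have "ln (z\<^sup>2) = ln (\<bar>z\<bar> * \<bar>z\<bar>)"
      by (simp add: power2_eq_square abs_mult[symmetric])
    also have "\<dots> = ln \<bar>z\<bar> + ln \<bar>z\<bar>"
      using False by (metis ln_mult_pos zero_less_abs_iff)
    finally show ?thesis by simp
  qed simp
  have "((\<lambda>y. ln (y\<^sup>2) / 2) has_real_derivative (1 / y\<^sup>2 * (2 * y)) / 2) (at y)"
    using assms by (intro derivative_eq_intros DERIV_chain2[OF DERIV_ln_divide]) auto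
  then show ?thesis
    using assms by (simp add: ln_abs power2_eq_square)
qed

lemma pd_ln_abs:
  "has_pd f \<theta> k a \<Longrightarrow> f \<theta> \<noteq> 0 \<Longrightarrow> pd (\<lambda>t. ln \<bar>f t\<bar>) \<theta> k = a / f \<theta>"
  by (rule pd_eqI) (drule has_pd_compose[OF _ DERIV_ln_abs]; simp)

lemma dlog_eq:
  "has_pd (\<lambda>\<theta>. \<psi> \<theta> x) \<theta> k d \<Longrightarrow> \<psi> \<theta> x \<noteq> 0 \<Longrightarrow> dlog \<psi> \<theta> k x = d / \<psi> \<theta> x"
  unfolding dlog_def by (rule pd_ln_abs)

lemma local_energy_d_eq:
  "has_pd (\<lambda>\<theta>. Hop (\<psi> \<theta>) x) \<theta> k h \<Longrightarrow> has_pd (\<lambda>\<theta>. \<psi> \<theta> x) \<theta> k d \<Longrightarrow> \<psi> \<theta> x \<noteq> 0 \<Longrightarrow>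
   local_energy_d Hop \<psi> \<theta> k x = (h * \<psi> \<theta> x - Hop (\<psi> \<theta>) x * d) / (\<psi> \<theta> x)\<^sup>2"
  unfolding local_energy_d_def local_energy_def by (rule pd_eqI, rule has_pd_divide)

lemma l2_norm_pos: "l2_norm M f \<noteq> 0 \<Longrightarrow> l2_norm M f > 0"
  unfolding l2_norm_def by (simp add: integral_nonneg_AE order_neq_le_trans)

lemma has_pd_l2_norm:
  assumes "has_pd (\<lambda>\<theta>. \<integral>x. (\<psi> \<theta> x)\<^sup>2 \<partial>M) \<theta> k (\<integral>x. 2 * \<psi> \<theta> x * \<psi>' x \<partial>M)"
    and "l2_norm M (\<psi> \<theta>) \<noteq> 0"
  shows "has_pd (\<lambda>\<theta>. l2_norm M (\<psi> \<theta>)) \<theta> k (l2_inner M (\<psi> \<theta>) \<psi>' / l2_norm M (\<psi> \<theta>))"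
proof -
  have "(\<integral>x. (\<psi> \<theta> x)\<^sup>2 \<partial>M) > 0"
    using l2_norm_pos[OF assms(2)] by (simp add: l2_norm_def)
  moreover have "(\<integral>x. 2 * \<psi> \<theta> x * \<psi>' x \<partial>M) = 2 * l2_inner M (\<psi> \<theta>) \<psi>'"
    by (simp add: l2_inner_def mult.assoc)
  ultimately show ?thesis
    using has_pd_compose[OF assms(1) DERIV_real_sqrt] by (simp add: l2_norm_def field_simps)
qed

lemma pd_psi_hat:
  assumes "has_pd (\<lambda>\<theta>. \<psi> \<theta> x) \<theta> k (\<psi>' x)"
    and "has_pd (\<lambda>\<theta>. \<integral>x. (\<psi> \<theta> x)\<^sup>2 \<partial>M) \<theta> k (\<integral>x. 2 * \<psi> \<theta> x * \<psi>' x \<partial>M)"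
    and "l2_norm M (\<psi> \<theta>) \<noteq> 0"
  shows "pd (\<lambda>\<theta>. psi_hat M \<psi> \<theta> x) \<theta> k =
    (\<psi>' x - l2_inner M (\<psi> \<theta>) \<psi>' / (l2_norm M (\<psi> \<theta>))\<^sup>2 * \<psi> \<theta> x) / l2_norm M (\<psi> \<theta>)"
  unfolding psi_hat_def using assms(3)
  by (subst pd_eqI[OF has_pd_divide[OF assms(1) has_pd_l2_norm[OF assms(2,3)] assms(3)]])
    (simp add: field_simps power2_eq_square)

lemma born_exp_dlog:
  assumes "AE x in M. \<psi> \<theta> x \<noteq> 0" and "\<And>x. has_pd (\<lambda>\<theta>. \<psi> \<theta> x) \<theta> k (\<psi>' x)"
    and [measurable]: "\<psi> \<theta> \<in> borel_measurable M" "\<psi>' \<in> borel_measurable M"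
      "dlog \<psi> \<theta> k \<in> borel_measurable M"
  shows "born_exp M \<psi> \<theta> (dlog \<psi> \<theta> k) = l2_inner M (\<psi> \<theta>) \<psi>' / (l2_norm M (\<psi> \<theta>))\<^sup>2"
proof -
  have "born_exp M \<psi> \<theta> (dlog \<psi> \<theta> k) = (\<integral>x. \<psi> \<theta> x * \<psi>' x / (l2_norm M (\<psi> \<theta>))\<^sup>2 \<partial>M)"
    unfolding born_exp_def born_def
  proof (rule integral_cong_AE)
    show "AE x in M. dlog \<psi> \<theta> k x * ((\<psi> \<theta> x)\<^sup>2 / (l2_norm M (\<psi> \<theta>))\<^sup>2) =
        \<psi> \<theta> x * \<psi>' x / (l2_norm M (\<psi> \<theta>))\<^sup>2"
      using assms(1) by eventually_elim (simp add: dlog_eq[OF assms(2)] power2_eq_square)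
  qed measurable
  then show ?thesis
    by (simp add: l2_inner_def)
qed

lemma L2_linear_operator_combination:
  assumes "L2_linear_operator M D Hop" and "f \<in> D" and "g \<in> D"
  shows "(\<lambda>x. (f x - c * g x) / N) \<in> D"
    and "AE x in M. Hop (\<lambda>x. (f x - c * g x) / N) x = (Hop f x - c * Hop g x) / N"
proof -
  have combination: "(\<lambda>x. (f x - c * g x) / N) = (\<lambda>x. (1 / N) * f x + (- c / N) * g x)"
    by (simp add: diff_divide_distrib)
  have lin_dom: "(\<lambda>x. (1 / N) * f x + (- c / N) * g x) \<in> D"
    and lin: "AE x in M. Hop (\<lambda>y. (1 / N) * f y + (- c / N) * g y) x =
      (1 / N) * Hop f x + (- c / N) * Hop g x"
    using assms unfolding L2_linear_operator_def by blast+
  from lin_dom show "(\<lambda>x. (f x - c * g x) / N) \<in> D"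
    unfolding combination .
  from lin show "AE x in M. Hop (\<lambda>x. (f x - c * g x) / N) x = (Hop f x - c * Hop g x) / N"
  proof eventually_elim
    case (elim x)
    show ?case
      unfolding combination elim by (simp add: diff_divide_distrib)
  qed
qed

lemma L2_linear_operator_measurable:
  assumes "L2_linear_operator M D Hop" and "f \<in> D"
  shows "f \<in> borel_measurable M" and "Hop f \<in> borel_measurable M"
  using assms unfolding L2_linear_operator_def L2_def by blast+

lemma Hmat_integrand_local_energy_form:
  assumes "\<psi> \<theta> x \<noteq> 0"
    and "has_pd (\<lambda>\<theta>. \<psi> \<theta> x) \<theta> i a" "has_pd (\<lambda>\<theta>. \<psi> \<theta> x) \<theta> j b"
    and "has_pd (\<lambda>\<theta>. Hop (\<psi> \<theta>) x) \<theta> j h"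
  shows "(a - ci * \<psi> \<theta> x) / l2_norm M (\<psi> \<theta>) *
      ((h - cj * Hop (\<psi> \<theta>) x) / l2_norm M (\<psi> \<theta>)) =
    (local_energy_d Hop \<psi> \<theta> j x + local_energy Hop \<psi> \<theta> x * (dlog \<psi> \<theta> j x - cj))
      * (dlog \<psi> \<theta> i x - ci) * born M \<psi> \<theta> x"
  unfolding local_energy_d_eq[where \<psi>=\<psi> and Hop=Hop, OF assms(4,3,1)]
    dlog_eq[where \<psi>=\<psi>, OF assms(2,1)] dlog_eq[where \<psi>=\<psi>, OF assms(3,1)]
    local_energy_def born_def
  using assms(1)
  by (cases "l2_norm M (\<psi> \<theta>) = 0") (simp_all add: field_simps power2_eq_square)

theorem mainTheorem1:
  fixes M :: "'a measure"
    and D :: "('a \<Rightarrow> real) set"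
    and Hop :: "('a \<Rightarrow> real) \<Rightarrow> ('a \<Rightarrow> real)"
    and \<psi> :: "real^'p \<Rightarrow> 'a \<Rightarrow> real"
    and \<theta> :: "real^'p" and i j :: 'p
  assumes op: "L2_linear_operator M D Hop"
    and dense: "densely_defined M D"
    and sa: "self_adjoint M D Hop"
    and psi_dom: "\<And>\<theta>. \<psi> \<theta> \<in> D"
    and psi_nonzero: "\<And>\<theta>. l2_norm M (\<psi> \<theta>) \<noteq> 0"
    and psi_ae_nonzero: "\<And>\<theta>. AE x in M. \<psi> \<theta> x \<noteq> 0"
    and psi_diff: "\<And>\<theta> k x. \<exists>d. has_pd (\<lambda>\<theta>'. \<psi> \<theta>' x) \<theta> k d"
    and Hpsi_diff: "\<And>\<theta> k x. \<exists>d. has_pd (\<lambda>\<theta>'. Hop (\<psi> \<theta>') x) \<theta> k d"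
    and dpsi_dom: "\<And>\<theta> k. (\<lambda>x. pd (\<lambda>\<theta>'. \<psi> \<theta>' x) \<theta> k) \<in> D"
    and H_commute: "\<And>\<theta> k. AE x in M.
           Hop (\<lambda>y. pd (\<lambda>\<theta>'. \<psi> \<theta>' y) \<theta> k) x = pd (\<lambda>\<theta>'. Hop (\<psi> \<theta>') x) \<theta> k"
    and diff_under_integral: "\<And>\<theta> k. has_pd (\<lambda>\<theta>'. \<integral>x. (\<psi> \<theta>' x)\<^sup>2 \<partial>M) \<theta> k
           (\<integral>x. 2 * \<psi> \<theta> x * pd (\<lambda>\<theta>'. \<psi> \<theta>' x) \<theta> k \<partial>M)"
    and dlog_meas: "\<And>\<theta> k. dlog \<psi> \<theta> k \<in> borel_measurable M"
    and ELd_meas: "\<And>\<theta> k. local_energy_d Hop \<psi> \<theta> k \<in> borel_measurable M"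
  shows "Hmat M Hop \<psi> \<theta> i j =
           born_exp M \<psi> \<theta> (\<lambda>x.
             (local_energy_d Hop \<psi> \<theta> j x
               + local_energy Hop \<psi> \<theta> x * (dlog \<psi> \<theta> j x - born_exp M \<psi> \<theta> (dlog \<psi> \<theta> j)))
             * (dlog \<psi> \<theta> i x - born_exp M \<psi> \<theta> (dlog \<psi> \<theta> i)))"
proof -
  define c where
    "c k = l2_inner M (\<psi> \<theta>) (\<lambda>x. pd (\<lambda>\<theta>'. \<psi> \<theta>' x) \<theta> k) / (l2_norm M (\<psi> \<theta>))\<^sup>2" for k
  have d\<psi>: "has_pd (\<lambda>\<theta>'. \<psi> \<theta>' x) \<theta> k (pd (\<lambda>\<theta>'. \<psi> \<theta>' x) \<theta> k)" for k x
    using psi_diff by (rule has_pd_pd)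
  have dH\<psi>: "has_pd (\<lambda>\<theta>'. Hop (\<psi> \<theta>') x) \<theta> k (pd (\<lambda>\<theta>'. Hop (\<psi> \<theta>') x) \<theta> k)" for k x
    using Hpsi_diff by (rule has_pd_pd)
  note D_measurable = L2_linear_operator_measurable[OF op]
  note [measurable] = D_measurable[OF psi_dom] D_measurable[OF dpsi_dom] dlog_meas ELd_meas
    D_measurable[OF L2_linear_operator_combination(1)[OF op dpsi_dom psi_dom]]
  have d\<psi>_hat: "(\<lambda>x. pd (\<lambda>\<theta>'. psi_hat M \<psi> \<theta>' x) \<theta> k) =
      (\<lambda>x. (pd (\<lambda>\<theta>'. \<psi> \<theta>' x) \<theta> k - c k * \<psi> \<theta> x) / l2_norm M (\<psi> \<theta>))" for k
    using pd_psi_hat[OF d\<psi> diff_under_integral psi_nonzero] by (simp add: c_def)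
  have Hd\<psi>_hat: "AE x in M.
      Hop (\<lambda>x. (pd (\<lambda>\<theta>'. \<psi> \<theta>' x) \<theta> j - c j * \<psi> \<theta> x) / l2_norm M (\<psi> \<theta>)) x =
      (pd (\<lambda>\<theta>'. Hop (\<psi> \<theta>') x) \<theta> j - c j * Hop (\<psi> \<theta>) x) / l2_norm M (\<psi> \<theta>)"
    using L2_linear_operator_combination(2)[OF op dpsi_dom[of \<theta> j] psi_dom[of \<theta>]]
      H_commute[of \<theta> j]
    by eventually_elim simp
  have mean_dlog: "born_exp M \<psi> \<theta> (dlog \<psi> \<theta> k) = c k" for k
    unfolding c_def by (rule born_exp_dlog[OF psi_ae_nonzero d\<psi>]) measurable
  show ?thesis
    unfolding Hmat_def l2_inner_def d\<psi>_hat mean_dlog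
    unfolding born_exp_def
  proof (rule integral_cong_AE, goal_cases lhs_measurable rhs_measurable integrand)
    case integrand
    from psi_ae_nonzero[of \<theta>] Hd\<psi>_hat show ?case
    proof eventually_elim
      case (elim x)
      show ?case
        unfolding elim(2) by (rule Hmat_integrand_local_energy_form[OF elim(1) d\<psi> d\<psi> dH\<psi>])
    qed
  qed (unfold born_def local_energy_def, measurable)
qed

end
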